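(* Let $G$ be a group (finite or infinite), let $F$ be a field of characteristic zero, and let $\mathfrak{S}$ be a subring of $F[G]$. Then $\mathfrak{S}$ is a Schur ring over $G$ if and only if $\mathfrak{S}$ is closed under the Hadamard product $\circ$ and under the involution $*$, $1\in\mathfrak{S}$, and for every $g\in G$ there exists $\alpha\in\mathfrak{S}$ with $g\in\operatorname{supp}(\alpha)$.
   Context: Elements of $F[G]$ are $\alpha=\sum_{g\in G}\alpha_g g$ with finitely many nonzero $\alpha_g\in F$; $\operatorname{supp}(\alpha)=\{g\mid\alpha_g\neq0\}$; $\alpha\circ\beta=\sum_g\alpha_g\beta_g g$; $\alpha^*=\sum_g\alpha_g g^{-1}$. For finite $C\subseteq G$, $\overline{C}=\sum_{g\in C}g$ and $C^*=\{g^{-1}\mid g\in C\}$. A Schur module is an $F$-subspace $\mathfrak{S}=\operatorname{Span}_F\{\overline{C}\mid C\in\mathcal{P}\}$ for a partition $\mathcal{P}$ of $G$ into finite sets; this partition is denoted $\mathcal{D}(\mathfrak{S})$. A Schur ring over $G$ is a Schur module $\mathfrak{S}$ such that (i) $\{1\}\in\mathcal{D}(\mathfrak{S})$; (ii) $C\in\mathcal{D}(\mathfrak{S})$ implies $C^*\in\mathcal{D}(\mathfrak{S})$; (iii) for all $C,D\in\mathcal{D}(\mathfrak{S})$, $\overline{C}\cdot\overline{D}=\sum_{E\in\mathcal{D}(\mathfrak{S})}\lambda_{CDE}\overline{E}$ with only finitely many $\lambda_{CDE}\in F$ nonzero. *)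

theory Defs
  imports Main
begin

text \<open>The group G is a type of class group_add (not necessarily commutative),
  written additively: group product g*h is g + h, inverse is -g, identity is 0.
  Elements of F[G] are finitely supported functions G \<Rightarrow> F.\<close>

definition supp :: "('g \<Rightarrow> 'f::zero) \<Rightarrow> 'g set" where
  "supp a = {g. a g \<noteq> 0}"

definition grp_alg :: "('g \<Rightarrow> 'f::zero) set" where
  "grp_alg = {a. finite (supp a)}"

definition conv :: "('g::group_add \<Rightarrow> 'f::field) \<Rightarrow> ('g \<Rightarrow> 'f) \<Rightarrow> ('g \<Rightarrow> 'f)" where
  "conv a b = (\<lambda>g. \<Sum>h\<in>supp a. a h * b (- h + g))"

definition had :: "('g \<Rightarrow> 'f::field) \<Rightarrow> ('g \<Rightarrow> 'f) \<Rightarrow> ('g \<Rightarrow> 'f)" where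
  "had a b = (\<lambda>g. a g * b g)"

definition star :: "('g::group_add \<Rightarrow> 'f::field) \<Rightarrow> ('g \<Rightarrow> 'f)" where
  "star a = (\<lambda>g. a (- g))"

definition unit_elt :: "'g::group_add \<Rightarrow> 'f::field" where
  "unit_elt = (\<lambda>g. if g = 0 then 1 else 0)"

definition bar :: "'g set \<Rightarrow> ('g \<Rightarrow> 'f::field)" where
  "bar C = (\<lambda>g. if g \<in> C then 1 else 0)"

definition fspan :: "('g \<Rightarrow> 'f::field) set \<Rightarrow> ('g \<Rightarrow> 'f) set" where
  "fspan X = {a. \<exists>T c. finite T \<and> T \<subseteq> X \<and> a = (\<lambda>g. \<Sum>x\<in>T. c x * x g)}"

definition finite_partition :: "'g set set \<Rightarrow> bool" where
  "finite_partition P \<longleftrightarrow> (\<forall>C\<in>P. C \<noteq> {} \<and> finite C)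
     \<and> (\<forall>C\<in>P. \<forall>D\<in>P. C \<noteq> D \<longrightarrow> C \<inter> D = {}) \<and> \<Union>P = UNIV"

definition schur_module_of :: "('g \<Rightarrow> 'f::field) set \<Rightarrow> 'g set set \<Rightarrow> bool" where
  "schur_module_of S P \<longleftrightarrow> finite_partition P \<and> S = fspan (bar ` P)"

definition schur_ring :: "('g::group_add \<Rightarrow> 'f::field) set \<Rightarrow> bool" where
  "schur_ring S \<longleftrightarrow> (\<exists>P. schur_module_of S P
     \<and> {0} \<in> P
     \<and> (\<forall>C\<in>P. uminus ` C \<in> P)
     \<and> (\<forall>C\<in>P. \<forall>D\<in>P. \<exists>T lam. finite T \<and> T \<subseteq> P \<and>
           conv (bar C) (bar D) = (\<lambda>g. \<Sum>E\<in>T. lam E * (bar E g :: 'f))))"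

text \<open>Subring of F[G], read as an F-subalgebra (not necessarily containing 1).\<close>
definition subalgebra :: "('g::group_add \<Rightarrow> 'f::field) set \<Rightarrow> bool" where
  "subalgebra S \<longleftrightarrow> S \<subseteq> grp_alg \<and> (\<lambda>g. 0) \<in> S
     \<and> (\<forall>a\<in>S. \<forall>b\<in>S. (\<lambda>g. a g + b g) \<in> S)
     \<and> (\<forall>c. \<forall>a\<in>S. (\<lambda>g. c * a g) \<in> S)
     \<and> (\<forall>a\<in>S. \<forall>b\<in>S. conv a b \<in> S)"

end

theory Submission
  imports Defs
begin

text \<open>Indicators of the blocks of a partition are orthogonal idempotents for the Hadamard
  product, so a Schur ring is closed under it. Conversely, if \<open>S\<close> is closed under the Hadamard
  product, then the indicator of every nonzero level set of some \<open>a \<in> S\<close> is a polynomial without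
  constant term in \<open>a\<close>, hence lies in \<open>S\<close>. The minimal nonempty finite sets whose indicators lie
  in \<open>S\<close> therefore partition \<open>G\<close>, every element of \<open>S\<close> is constant on them, and \<open>S\<close> is their span;
  closure under \<open>*\<close> and \<open>1 \<in> S\<close> make this partition closed under inversion and contain \<open>{0}\<close>.\<close>

lemma bar_inj: "inj (bar :: 'g set \<Rightarrow> 'g \<Rightarrow> 'f::field)"
  by (rule injI) (metis (full_types) bar_def one_neq_zero subsetI subset_antisym)

lemma supp_bar [simp]: "supp (bar C :: 'g \<Rightarrow> 'f::field) = C"
  by (simp add: supp_def bar_def)

lemma had_bar: "had (bar C) (bar D) = (bar (C \<inter> D) :: 'g \<Rightarrow> 'f::field)"
  by (auto simp: had_def bar_def)

lemma star_bar: "star (bar C) = (bar (uminus ` C) :: 'g::group_add \<Rightarrow> 'f::field)"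
  by (force simp: star_def bar_def)

lemma unit_elt_eq_bar: "unit_elt = (bar {0} :: 'g::group_add \<Rightarrow> 'f::field)"
  by (simp add: unit_elt_def bar_def)

lemma fspan_image_bar:
  fixes P :: "'g set set"
  shows "fspan (bar ` P) =
    {a. \<exists>T c. finite T \<and> T \<subseteq> P \<and> a = (\<lambda>g. \<Sum>C\<in>T. c C * (bar C g :: 'f::field))}"
    (is "?L = ?R")
proof
  show "?L \<subseteq> ?R"
  proof
    fix a assume "a \<in> ?L"
    then obtain T' c where T': "finite T'" "T' \<subseteq> bar ` P" and a: "a = (\<lambda>g. \<Sum>x\<in>T'. c x * x g)"
      unfolding fspan_def by blast
    then obtain T where T: "T \<subseteq> P" "T' = bar ` T" by (meson subset_image_iff)
    have inj: "inj_on (bar :: 'g set \<Rightarrow> 'g \<Rightarrow> 'f) T" using bar_inj by (rule inj_on_subset) simp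
    have "finite T" using T'(1) unfolding T(2) finite_image_iff[OF inj] .
    moreover have "a = (\<lambda>g. \<Sum>C\<in>T. c (bar C) * bar C g)"
      unfolding a T(2) sum.reindex[OF inj] by simp
    ultimately show "a \<in> ?R" using T(1) by (intro CollectI exI conjI)
  qed
  show "?R \<subseteq> ?L"
  proof
    fix a assume "a \<in> ?R"
    then obtain T c where T: "finite T" "T \<subseteq> P" and a: "a = (\<lambda>g. \<Sum>C\<in>T. c C * bar C g)"
      by (elim CollectE exE conjE)
    have inj: "inj_on (bar :: 'g set \<Rightarrow> 'g \<Rightarrow> 'f) T" using bar_inj by (rule inj_on_subset) simp
    have "a = (\<lambda>g. \<Sum>x\<in>bar ` T. c (inv bar x) * x g)"
      unfolding a sum.reindex[OF inj] by (simp add: inv_f_f[OF bar_inj])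
    then show "a \<in> ?L"
      unfolding fspan_def using T by (intro CollectI exI conjI) auto
  qed
qed

lemma sum_bar_apply:
  fixes c :: "'g set \<Rightarrow> 'f::field"
  assumes "pairwise disjnt P" "finite T" "T \<subseteq> P" "A \<in> P" "g \<in> A"
  shows "(\<Sum>C\<in>T. c C * bar C g) = (if A \<in> T then c A else 0)"
proof -
  have "c C * bar C g = (if C = A then c C else 0)" if "C \<in> T" for C
    using assms that unfolding pairwise_def disjnt_def bar_def by auto
  then show ?thesis
    using sum.delta[OF \<open>finite T\<close>, of A c] by (simp cong: sum.cong)
qed

lemma fspan_image_bar_had:
  fixes a b :: "'g \<Rightarrow> 'f::field"
  assumes P: "finite_partition P" and "a \<in> fspan (bar ` P)" "b \<in> fspan (bar ` P)"
  shows "had a b \<in> fspan (bar ` P)"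
proof -
  obtain T c where T: "finite T" "T \<subseteq> P" and a: "a = (\<lambda>g. \<Sum>C\<in>T. c C * bar C g)"
    using assms(2) unfolding fspan_image_bar by auto
  obtain U d where U: "finite U" "U \<subseteq> P" and b: "b = (\<lambda>g. \<Sum>C\<in>U. d C * bar C g)"
    using assms(3) unfolding fspan_image_bar by auto
  have disj: "pairwise disjnt P"
    using P unfolding finite_partition_def pairwise_def disjnt_def by blast
  have TU: "finite (T \<inter> U)" "T \<inter> U \<subseteq> P" using T U by auto
  have "had a b = (\<lambda>g. \<Sum>C\<in>T \<inter> U. (c C * d C) * bar C g)"
  proof
    fix g
    obtain A where A: "A \<in> P" "g \<in> A" using P unfolding finite_partition_def by blast
    show "had a b g = (\<Sum>C\<in>T \<inter> U. (c C * d C) * bar C g)"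
      unfolding had_def a b sum_bar_apply[OF disj T A] sum_bar_apply[OF disj U A]
        sum_bar_apply[OF disj TU A] by simp
  qed
  then show ?thesis
    unfolding fspan_image_bar using TU
    by (intro CollectI exI[of _ "T \<inter> U"] exI[of _ "\<lambda>C. c C * d C"] conjI)
qed

lemma fspan_image_bar_star:
  fixes a :: "'g::group_add \<Rightarrow> 'f::field"
  assumes P: "\<forall>C\<in>P. uminus ` C \<in> P" and "a \<in> fspan (bar ` P)"
  shows "star a \<in> fspan (bar ` P)"
proof -
  obtain T c where T: "finite T" "T \<subseteq> P" and a: "a = (\<lambda>g. \<Sum>C\<in>T. c C * bar C g)"
    using assms(2) unfolding fspan_image_bar by auto
  have inj: "inj_on (image uminus) T"
    by (simp add: inj_image_eq_iff inj_on_def)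
  have "star a = (\<lambda>g. \<Sum>C\<in>T. c C * bar (uminus ` C) g)"
    unfolding a star_bar[symmetric] by (simp add: star_def)
  also have "\<dots> = (\<lambda>g. \<Sum>E\<in>image uminus ` T. c (uminus ` E) * bar E g)"
    unfolding sum.reindex[OF inj] by (simp add: image_image)
  finally have "star a = (\<lambda>g. \<Sum>E\<in>image uminus ` T. c (uminus ` E) * bar E g)" .
  moreover have "finite (image uminus ` T)" "image uminus ` T \<subseteq> P" using T P by auto
  ultimately show ?thesis
    unfolding fspan_image_bar
    by (intro CollectI exI[of _ "image uminus ` T"] exI[of _ "\<lambda>E. c (uminus ` E)"] conjI)
qed

lemma schur_ring_imp_closed:
  fixes S :: "('g::group_add \<Rightarrow> 'f::field) set"
  assumes "schur_ring S"
  shows "(\<forall>a\<in>S. \<forall>b\<in>S. had a b \<in> S) \<and> (\<forall>a\<in>S. star a \<in> S) \<and> unit_elt \<in> S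
           \<and> (\<forall>g. \<exists>a\<in>S. g \<in> supp a)"
proof -
  obtain P where P: "finite_partition P" and S: "S = fspan (bar ` P)"
    and zero: "{0} \<in> P" and uminus: "\<forall>C\<in>P. uminus ` C \<in> P"
    using assms unfolding schur_ring_def schur_module_of_def by blast
  have bar_mem: "bar C \<in> S" if "C \<in> P" for C
    unfolding S fspan_image_bar using that
    by (intro CollectI exI[of _ "{C}"] exI[of _ "\<lambda>_. 1"] conjI) auto
  have "\<exists>a\<in>S. g \<in> supp a" for g
  proof -
    obtain C where "C \<in> P" "g \<in> C" using P unfolding finite_partition_def by blast
    then show ?thesis using bar_mem supp_bar by metis
  qed
  then show ?thesis
    using fspan_image_bar_had[OF P] fspan_image_bar_star[OF uminus] bar_mem[OF zero]
    unfolding S unit_elt_eq_bar by blast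
qed

locale hadamard_subalgebra =
  fixes S :: "('g::group_add \<Rightarrow> 'f::field) set"
  assumes subalgebra: "subalgebra S"
    and had_mem: "a \<in> S \<Longrightarrow> b \<in> S \<Longrightarrow> had a b \<in> S"
begin

lemma finite_supp: "a \<in> S \<Longrightarrow> finite (supp a)"
  using subalgebra by (auto simp: subalgebra_def grp_alg_def)

lemma add_mem: "a \<in> S \<Longrightarrow> b \<in> S \<Longrightarrow> (\<lambda>g. a g + b g) \<in> S"
  using subalgebra by (simp add: subalgebra_def)

lemma scale_mem: "a \<in> S \<Longrightarrow> (\<lambda>g. c * a g) \<in> S"
  using subalgebra by (simp add: subalgebra_def)

lemma diff_mem: "a \<in> S \<Longrightarrow> b \<in> S \<Longrightarrow> (\<lambda>g. a g - b g) \<in> S"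
  using add_mem[OF _ scale_mem[of b "-1"]] by simp

lemma conv_mem: "a \<in> S \<Longrightarrow> b \<in> S \<Longrightarrow> conv a b \<in> S"
  using subalgebra by (simp add: subalgebra_def)

lemma sum_mem:
  "finite T \<Longrightarrow> (\<And>x. x \<in> T \<Longrightarrow> f x \<in> S) \<Longrightarrow> (\<lambda>g. \<Sum>x\<in>T. c x * f x g) \<in> S"
proof (induction T rule: finite_induct)
  case empty
  then show ?case using subalgebra by (simp add: subalgebra_def)
next
  case (insert x T)
  then show ?case using add_mem[OF scale_mem] by simp
qed

lemma mult_prod_diff_mem:
  assumes "a \<in> S" "finite W"
  shows "(\<lambda>x. a x * (\<Prod>v\<in>W. a x - v)) \<in> S"
  using assms(2)
proof (induction W rule: finite_induct)
  case empty
  then show ?case using \<open>a \<in> S\<close> by simp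
next
  case (insert w W)
  let ?f = "\<lambda>x. a x * (\<Prod>v\<in>W. a x - v)"
  have "(\<lambda>x. had ?f a x - w * ?f x) \<in> S"
    using diff_mem[OF had_mem scale_mem] insert.IH \<open>a \<in> S\<close> by blast
  moreover have "had ?f a x - w * ?f x = a x * (\<Prod>v\<in>insert w W. a x - v)" for x
    using insert.hyps by (simp add: had_def algebra_simps)
  ultimately show ?case by simp
qed

lemma bar_level_set_mem:
  assumes a: "a \<in> S" and "c \<noteq> 0"
  shows "bar {x. a x = c} \<in> S"
proof -
  (* t \<mapsto> t * (\<Prod>v\<in>W. t - v) / K is 1 at c and vanishes at 0 and at every other value of a. *)
  define W where "W = a ` supp a - {c}"
  define K where "K = c * (\<Prod>v\<in>W. c - v)"
  have W: "finite W" using finite_supp[OF a] by (simp add: W_def)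
  have "K \<noteq> 0" using \<open>c \<noteq> 0\<close> W by (simp add: K_def W_def)
  have "bar {x. a x = c} = (\<lambda>x. (1 / K) * (a x * (\<Prod>v\<in>W. a x - v)))"
  proof
    fix x
    show "bar {x. a x = c} x = (1 / K) * (a x * (\<Prod>v\<in>W. a x - v))"
    proof (cases "a x = c \<or> a x = 0")
      case True
      then show ?thesis using \<open>K \<noteq> 0\<close> \<open>c \<noteq> 0\<close> by (auto simp: bar_def K_def)
    next
      case False
      then have "a x \<in> W" by (auto simp: W_def supp_def)
      then show ?thesis using False W by (simp add: bar_def prod_zero_iff)
    qed
  qed
  then show ?thesis using scale_mem[OF mult_prod_diff_mem[OF a W], of "1 / K"] by (simp only:)
qed

definition blocks :: "'g set set" where
  "blocks = {C. C \<noteq> {} \<and> finite C \<and> bar C \<in> S}"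

definition atoms :: "'g set set" where
  "atoms = {C \<in> blocks. \<forall>D\<in>blocks. D \<subseteq> C \<longrightarrow> D = C}"

lemma atom_blocks: "A \<in> atoms \<Longrightarrow> A \<in> blocks"
  by (simp add: atoms_def)

lemma atom_bar_mem: "A \<in> atoms \<Longrightarrow> bar A \<in> S"
  by (simp add: atoms_def blocks_def)

lemma atom_minimal: "A \<in> atoms \<Longrightarrow> D \<in> blocks \<Longrightarrow> D \<subseteq> A \<Longrightarrow> D = A"
  by (simp add: atoms_def)

lemma Int_blocks: "C \<in> blocks \<Longrightarrow> D \<in> blocks \<Longrightarrow> C \<inter> D \<noteq> {} \<Longrightarrow> C \<inter> D \<in> blocks"
  using had_mem[of "bar C" "bar D"] by (simp add: blocks_def had_bar)

lemma Diff_blocks: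
  assumes "C \<in> blocks" "D \<in> blocks" "C - D \<noteq> {}"
  shows "C - D \<in> blocks"
proof -
  have "(bar (C - D) :: 'g \<Rightarrow> 'f) = (\<lambda>g. bar C g - had (bar C) (bar D) g)"
    by (auto simp: bar_def had_def)
  then show ?thesis
    using assms diff_mem[OF _ had_mem, of "bar C" "bar C" "bar D"] by (simp add: blocks_def)
qed

lemma level_set_blocks:
  assumes "a \<in> S" "a g \<noteq> 0"
  shows "{x. a x = a g} \<in> blocks"
proof -
  have "{x. a x = a g} \<subseteq> supp a" using assms(2) by (auto simp: supp_def)
  then have "finite {x. a x = a g}" using finite_supp[OF assms(1)] finite_subset by blast
  then show ?thesis using assms bar_level_set_mem by (auto simp: blocks_def)
qed

lemma ex_atom:
  assumes "a \<in> S" "g \<in> supp a"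
  shows "\<exists>A\<in>atoms. g \<in> A"
proof -
  have "{x. a x = a g} \<in> blocks" "g \<in> {x. a x = a g}"
    using assms level_set_blocks by (auto simp: supp_def)
  then obtain C where C: "C \<in> blocks" "g \<in> C"
    and min: "\<And>D. D \<in> blocks \<Longrightarrow> g \<in> D \<Longrightarrow> card C \<le> card D"
    using ex_has_least_nat[of "\<lambda>C. C \<in> blocks \<and> g \<in> C"] by blast
  have "finite C" using C(1) by (simp add: blocks_def)
  have "D = C" if D: "D \<in> blocks" "D \<subseteq> C" for D
  proof (cases "g \<in> D")
    case True
    show ?thesis using card_seteq[OF \<open>finite C\<close> D(2) min[OF D(1) True]] .
  next
    case False
    then have "C - D \<in> blocks" "g \<in> C - D" using Diff_blocks[OF C(1) D(1)] C(2) by blast+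
    moreover have "C - D \<subset> C" using D by (auto simp: blocks_def)
    ultimately have "card C < card C"
      using min psubset_card_mono[OF \<open>finite C\<close>] by (meson le_less_trans)
    then show ?thesis by simp
  qed
  then show ?thesis using C unfolding atoms_def by blast
qed

lemma atoms_disjoint: "pairwise disjnt atoms"
proof (rule pairwiseI)
  fix A B assume A: "A \<in> atoms" and B: "B \<in> atoms" and "A \<noteq> B"
  show "disjnt A B"
  proof (rule ccontr)
    assume "\<not> disjnt A B"
    then have "A \<inter> B \<in> blocks"
      using Int_blocks[OF atom_blocks[OF A] atom_blocks[OF B]] by (simp add: disjnt_def)
    then have "A \<inter> B = A" "A \<inter> B = B" using atom_minimal A B by blast+
    then show False using \<open>A \<noteq> B\<close> by simp
  qed
qed

lemma atom_const:
  assumes a: "a \<in> S" and A: "A \<in> atoms" and "x \<in> A" "y \<in> A"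
  shows "a x = a y"
proof -
  have eq: "a y = a x" if "a x \<noteq> 0" "x \<in> A" "y \<in> A" for x y
  proof -
    have "A \<inter> {z. a z = a x} \<in> blocks"
      using Int_blocks[OF atom_blocks[OF A] level_set_blocks[OF a \<open>a x \<noteq> 0\<close>]] \<open>x \<in> A\<close>
      by blast
    then have "A \<inter> {z. a z = a x} = A" using atom_minimal[OF A] by blast
    then show ?thesis using \<open>y \<in> A\<close> by blast
  qed
  show ?thesis
  proof (cases "a x = 0")
    case True
    then show ?thesis using eq[OF _ assms(4,3)] by metis
  next
    case False
    then show ?thesis using eq[OF _ assms(3,4)] by simp
  qed
qed

lemma mem_fspan_atoms:
  assumes cover: "\<And>g. \<exists>b\<in>S. g \<in> supp b" and a: "a \<in> S"
  shows "a \<in> fspan (bar ` atoms)"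
proof -
  define T where "T = {A \<in> atoms. A \<subseteq> supp a}"
  have "T \<subseteq> atoms" by (simp add: T_def)
  have "finite T"
    using finite_supp[OF a]
    by (rule rev_finite_subset[OF finite_Pow_iff[THEN iffD2]]) (auto simp: T_def)
  moreover have "a = (\<lambda>g. \<Sum>C\<in>T. a (SOME x. x \<in> C) * bar C g)"
  proof
    fix g
    obtain A where A: "A \<in> atoms" "g \<in> A" using cover ex_atom by blast
    have "a (SOME x. x \<in> A) = a g"
      using atom_const[OF a A(1) someI[of "\<lambda>x. x \<in> A"]] A(2) by blast
    moreover have "a g = 0" if "A \<notin> T"
    proof -
      obtain y where "y \<in> A" "a y = 0" using \<open>A \<notin> T\<close> A(1) by (auto simp: T_def supp_def)
      then show ?thesis using atom_const[OF a A(1)] A(2) by metis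
    qed
    moreover have "(\<Sum>C\<in>T. a (SOME x. x \<in> C) * bar C g)
        = (if A \<in> T then a (SOME x. x \<in> A) else 0)"
      by (rule sum_bar_apply[OF atoms_disjoint \<open>finite T\<close> \<open>T \<subseteq> atoms\<close> A])
    ultimately show "a g = (\<Sum>C\<in>T. a (SOME x. x \<in> C) * bar C g)"
      by simp
  qed
  ultimately show ?thesis
    unfolding fspan_image_bar using \<open>T \<subseteq> atoms\<close>
    by (intro CollectI exI[of _ T] exI[of _ "\<lambda>C. a (SOME x. x \<in> C)"] conjI)
qed

lemma finite_partition_atoms:
  assumes "\<And>g. \<exists>a\<in>S. g \<in> supp a"
  shows "finite_partition atoms"
  unfolding finite_partition_def
proof (intro conjI)
  show "\<forall>C\<in>atoms. C \<noteq> {} \<and> finite C" using atom_blocks by (simp add: blocks_def)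
  show "\<forall>C\<in>atoms. \<forall>D\<in>atoms. C \<noteq> D \<longrightarrow> C \<inter> D = {}"
    using atoms_disjoint by (simp add: pairwise_def disjnt_def)
  show "\<Union> atoms = UNIV" using assms ex_atom by blast
qed

lemma fspan_atoms_eq:
  assumes "\<And>g. \<exists>a\<in>S. g \<in> supp a"
  shows "fspan (bar ` atoms) = S"
proof (rule sym, rule)
  show "S \<subseteq> fspan (bar ` atoms)" using mem_fspan_atoms[OF assms] by blast
  show "fspan (bar ` atoms) \<subseteq> S"
  proof
    fix a :: "'g \<Rightarrow> 'f" assume "a \<in> fspan (bar ` atoms)"
    then obtain T c where "finite T" "T \<subseteq> atoms" "a = (\<lambda>g. \<Sum>C\<in>T. c C * bar C g)"
      unfolding fspan_image_bar by auto
    then show "a \<in> S" using sum_mem[of T bar c] atom_bar_mem by blast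
  qed
qed

lemma zero_atom:
  assumes "unit_elt \<in> S"
  shows "{0} \<in> atoms"
proof -
  have "{0} \<in> blocks" using assms by (simp add: blocks_def unit_elt_eq_bar)
  then show ?thesis by (auto simp: atoms_def blocks_def subset_singleton_iff)
qed

lemma uminus_atom:
  assumes star: "\<And>a. a \<in> S \<Longrightarrow> star a \<in> S" and A: "A \<in> atoms"
  shows "uminus ` A \<in> atoms"
proof -
  have uminus_blocks: "uminus ` C \<in> blocks" if "C \<in> blocks" for C
    using that star[of "bar C"] by (simp add: blocks_def star_bar)
  have "D = uminus ` A" if "D \<in> blocks" "D \<subseteq> uminus ` A" for D
  proof -
    have "uminus ` D \<subseteq> A" using \<open>D \<subseteq> uminus ` A\<close> by auto
    then have "uminus ` D = A" by (rule atom_minimal[OF A uminus_blocks[OF \<open>D \<in> blocks\<close>]])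
    then show ?thesis by (auto simp: image_image)
  qed
  then show ?thesis using uminus_blocks[OF atom_blocks[OF A]] by (simp add: atoms_def)
qed

lemma schur_ringI:
  assumes "\<And>a. a \<in> S \<Longrightarrow> star a \<in> S" "unit_elt \<in> S" "\<And>g. \<exists>a\<in>S. g \<in> supp a"
  shows "schur_ring S"
  unfolding schur_ring_def schur_module_of_def
proof (rule exI[of _ atoms], intro conjI ballI)
  show "finite_partition atoms" "S = fspan (bar ` atoms)"
    using finite_partition_atoms fspan_atoms_eq assms(3) by simp_all
  show "{0} \<in> atoms" using zero_atom assms(2) .
  show "uminus ` C \<in> atoms" if "C \<in> atoms" for C by (rule uminus_atom[OF assms(1) that])
  fix C D assume "C \<in> atoms" "D \<in> atoms"
  then have "conv (bar C) (bar D) \<in> fspan (bar ` atoms :: ('g \<Rightarrow> 'f) set)"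
    unfolding fspan_atoms_eq[OF assms(3)] by (intro conv_mem atom_bar_mem)
  then show "\<exists>T lam. finite T \<and> T \<subseteq> atoms
      \<and> conv (bar C) (bar D) = (\<lambda>g. \<Sum>E\<in>T. lam E * (bar E g :: 'f))"
    unfolding fspan_image_bar by auto
qed

end

theorem corollary2p10:
  fixes S :: "('g::group_add \<Rightarrow> 'f::field_char_0) set"
  assumes "subalgebra S"
  shows "schur_ring S \<longleftrightarrow>
           (\<forall>a\<in>S. \<forall>b\<in>S. had a b \<in> S) \<and> (\<forall>a\<in>S. star a \<in> S) \<and> unit_elt \<in> S
           \<and> (\<forall>g. \<exists>a\<in>S. g \<in> supp a)"
  using schur_ring_imp_closed[of S] hadamard_subalgebra.schur_ringI[of S]
    hadamard_subalgebra.intro[OF assms]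
  by blast

end
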